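(* For integers $0\le\ell\le n$, let $K_{n,\ell}$ be the number of fixed points of a uniformly random $\ell$-matching on $\{1,\dots,n\}$. If $n\to\infty$ and $\ell=\ell(n)$ satisfies $\ell/n\to\theta\in[0,1]$, then $K_{n,\ell}$ converges in distribution to a Poisson$(\theta)$ random variable; that is, for every fixed integer $k\ge0$, $$\mathbb P(K_{n,\ell}=k)\longrightarrow e^{-\theta}\frac{\theta^k}{k!}.$$
   Context: An $\ell$-matching on $\{1,\dots,n\}$ is an injection $\sigma:I\hookrightarrow\{1,\dots,n\}$ where $I\subseteq\{1,\dots,n\}$ with $|I|=\ell$; the uniform distribution is over all such pairs $(I,\sigma)$. A fixed point of $\sigma$ is an $i\in I$ with $\sigma(i)=i$. Poisson$(0)$ denotes the point mass at $0$. *)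

theory Defs
  imports "HOL-Analysis.Analysis" "HOL-Library.FuncSet"
begin

text \<open>An l-matching on {1..n}: a pair (I, sigma) with I a subset of {1..n} of size l
  and sigma an injection from I into {1..n}; sigma is represented as an extensional
  function (undefined outside I), so distinct pairs are distinct matchings.\<close>
definition matchings :: "nat \<Rightarrow> nat \<Rightarrow> (nat set \<times> (nat \<Rightarrow> nat)) set" where
  "matchings n l = {(I, \<sigma>). I \<subseteq> {1..n} \<and> card I = l \<and>
      \<sigma> \<in> I \<rightarrow>\<^sub>E {1..n} \<and> inj_on \<sigma> I}"

definition fixed_points :: "nat set \<times> (nat \<Rightarrow> nat) \<Rightarrow> nat" where
  "fixed_points m = card {i \<in> fst m. snd m i = i}"

definition prob_fixed :: "nat \<Rightarrow> nat \<Rightarrow> nat \<Rightarrow> real" where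
  "prob_fixed n l k =
     real (card {m \<in> matchings n l. fixed_points m = k}) / real (card (matchings n l))"

end

theory Submission
  imports Defs
begin

(* Fixing a set F of r points of an l-matching on {1..n} leaves an (l-r)-matching of the
   complement of F, and there are C(n,l)^2 l! l-matchings of an n-set; double counting pairs
   (m, F) with F among the fixed points of m therefore gives the binomial moments
   r! E[C(K,r)] = C(l,r) / C(n,r), which tend to theta^r, the factorial moments of
   Poisson(theta). Binomial inversion writes P(K = k) as the sum over r of
   (-1)^(r+k) C(r,k) E[C(K,r)]; its terms are dominated by C(r,k)/r!, so Tannery's theorem
   passes the limit through the series, which then sums to exp(-theta) theta^k / k!. *)

definition matchings_on :: "'a set \<Rightarrow> nat \<Rightarrow> ('a set \<times> ('a \<Rightarrow> 'a)) set" where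
  "matchings_on A l = {(I, \<sigma>). I \<subseteq> A \<and> card I = l \<and> \<sigma> \<in> I \<rightarrow>\<^sub>E A \<and> inj_on \<sigma> I}"

definition fixed_point_set :: "'a set \<times> ('a \<Rightarrow> 'a) \<Rightarrow> 'a set" where
  "fixed_point_set m = {i \<in> fst m. snd m i = i}"

lemma matchings_eq_matchings_on: "matchings n l = matchings_on {1..n} l"
  by (simp add: matchings_def matchings_on_def)

lemma fixed_points_eq_card_fixed_point_set: "fixed_points m = card (fixed_point_set m)"
  by (simp add: fixed_points_def fixed_point_set_def)

lemma matchings_on_eq_Sigma:
  "matchings_on A l = (SIGMA I:{I. I \<subseteq> A \<and> card I = l}. {\<sigma> \<in> I \<rightarrow>\<^sub>E A. inj_on \<sigma> I})"
  by (auto simp: matchings_on_def)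

lemma finite_injections_PiE:
  "finite I \<Longrightarrow> finite A \<Longrightarrow> finite {\<sigma> \<in> I \<rightarrow>\<^sub>E A. inj_on \<sigma> I}"
  by (simp add: finite_PiE)

lemma finite_matchings_on: "finite A \<Longrightarrow> finite (matchings_on A l)"
  unfolding matchings_on_eq_Sigma
  by (intro finite_SigmaI finite_injections_PiE) (auto intro: finite_subset)

lemma prod_diff_eq_fact_mult_choose: "(\<Prod>i<l. m - i) = fact l * (m choose l)"
proof (cases "l \<le> m")
  case True
  then have "real (\<Prod>i<l. m - i) = (\<Prod>i<l. real m - real i)"
    by simp
  also have "\<dots> = fact l * (real m gchoose l)"
    by (simp add: gbinomial_mult_fact atLeast0LessThan)
  also have "\<dots> = real (fact l * (m choose l))"
    by (simp add: binomial_gbinomial)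
  finally show ?thesis
    by (simp only: of_nat_eq_iff)
next
  case False
  then show ?thesis
    by (auto simp: binomial_eq_0)
qed

lemma card_matchings_on:
  assumes "finite A"
  shows "card (matchings_on A l) = (card A choose l)^2 * fact l"
proof -
  have "card {\<sigma> \<in> I \<rightarrow>\<^sub>E A. inj_on \<sigma> I} = fact l * (card A choose l)"
    if "I \<subseteq> A" "card I = l" for I
    using card_inj_on_subset_funcset[of I A I] that assms
    by (simp add: finite_subset atLeast0LessThan prod_diff_eq_fact_mult_choose)
  then show ?thesis
    unfolding matchings_on_eq_Sigma using assms
    by (subst card_SigmaI) (auto simp: n_subsets power2_eq_square
        intro: finite_injections_PiE finite_subset)
qed

lemma restrict_matching_in_matchings_on:
  assumes m: "(I, \<sigma>) \<in> matchings_on A l" and F: "F \<subseteq> fixed_point_set (I, \<sigma>)"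
    and "finite A"
  shows "(I - F, restrict \<sigma> (I - F)) \<in> matchings_on (A - F) (l - card F)"
proof -
  from m F have I: "I \<subseteq> A" "card I = l" "\<sigma> \<in> I \<rightarrow>\<^sub>E A" "inj_on \<sigma> I" "F \<subseteq> I"
    and fixed: "\<And>i. i \<in> F \<Longrightarrow> \<sigma> i = i"
    by (auto simp: matchings_on_def fixed_point_set_def)
  have "\<sigma> i \<notin> F" if "i \<in> I - F" for i
  proof
    assume "\<sigma> i \<in> F"
    then have "\<sigma> (\<sigma> i) = \<sigma> i"
      by (rule fixed)
    with I(4,5) \<open>\<sigma> i \<in> F\<close> that have "\<sigma> i = i"
      by (auto dest: inj_onD)
    with \<open>\<sigma> i \<in> F\<close> that show False
      by simp
  qed
  moreover have "card (I - F) = l - card F"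
    using I \<open>finite A\<close> by (simp add: card_Diff_subset finite_subset)
  ultimately show ?thesis
    using I by (auto simp: matchings_on_def inj_on_def)
qed

lemma extend_matching_in_matchings_on:
  assumes m: "(J, \<tau>) \<in> matchings_on (A - F) j" and "F \<subseteq> A" "finite A"
  shows "(J \<union> F, \<lambda>i. if i \<in> F then i else \<tau> i) \<in> matchings_on A (j + card F)"
proof -
  from m have J: "J \<subseteq> A - F" "card J = j" "\<tau> \<in> J \<rightarrow>\<^sub>E A - F" "inj_on \<tau> J"
    by (auto simp: matchings_on_def)
  have "card (J \<union> F) = j + card F"
    using J \<open>F \<subseteq> A\<close> \<open>finite A\<close> by (subst card_Un_disjoint) (auto intro: finite_subset)
  moreover have "(\<lambda>i. if i \<in> F then i else \<tau> i) \<in> J \<union> F \<rightarrow>\<^sub>E A"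
    using J(3) \<open>F \<subseteq> A\<close> by (auto simp: PiE_iff extensional_def)
  moreover have "inj_on (\<lambda>i. if i \<in> F then i else \<tau> i) (J \<union> F)"
    using J(1,3,4) by (auto simp: inj_on_def PiE_iff)
  ultimately show ?thesis
    using J(1) \<open>F \<subseteq> A\<close> by (auto simp: matchings_on_def)
qed

lemma card_matchings_on_fixing:
  assumes "finite A" "F \<subseteq> A" "card F \<le> l"
  shows "card {m \<in> matchings_on A l. F \<subseteq> fixed_point_set m}
       = card (matchings_on (A - F) (l - card F))"
proof -
  define restrict_fixed :: "'a set \<times> ('a \<Rightarrow> 'a) \<Rightarrow> 'a set \<times> ('a \<Rightarrow> 'a)"
    where "restrict_fixed = (\<lambda>(I, \<sigma>). (I - F, restrict \<sigma> (I - F)))"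
  define extend_fixed :: "'a set \<times> ('a \<Rightarrow> 'a) \<Rightarrow> 'a set \<times> ('a \<Rightarrow> 'a)"
    where "extend_fixed = (\<lambda>(J, \<tau>). (J \<union> F, \<lambda>i. if i \<in> F then i else \<tau> i))"
  have "bij_betw restrict_fixed {m \<in> matchings_on A l. F \<subseteq> fixed_point_set m}
      (matchings_on (A - F) (l - card F))"
  proof (rule bij_betw_byWitness[where f' = extend_fixed])
    show "\<forall>m\<in>{m \<in> matchings_on A l. F \<subseteq> fixed_point_set m}. extend_fixed (restrict_fixed m) = m"
      by (force simp: restrict_fixed_def extend_fixed_def matchings_on_def fixed_point_set_def
          PiE_iff extensional_def)
    show "\<forall>m\<in>matchings_on (A - F) (l - card F). restrict_fixed (extend_fixed m) = m"
      by (force simp: restrict_fixed_def extend_fixed_def matchings_on_def PiE_iff extensional_def)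
    show "restrict_fixed ` {m \<in> matchings_on A l. F \<subseteq> fixed_point_set m}
        \<subseteq> matchings_on (A - F) (l - card F)"
      using restrict_matching_in_matchings_on[OF _ _ \<open>finite A\<close>]
      by (auto simp: restrict_fixed_def)
    show "extend_fixed ` matchings_on (A - F) (l - card F)
        \<subseteq> {m \<in> matchings_on A l. F \<subseteq> fixed_point_set m}"
      using extend_matching_in_matchings_on[OF _ \<open>F \<subseteq> A\<close> \<open>finite A\<close>, of _ _ "l - card F"]
        \<open>card F \<le> l\<close> by (auto simp: extend_fixed_def fixed_point_set_def)
  qed
  then show ?thesis
    by (rule bij_betw_same_card)
qed

lemma sum_choose_card_eq_sum_card_supersets:
  assumes "finite A" "finite M" "\<And>m. m \<in> M \<Longrightarrow> S m \<subseteq> A"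
  shows "(\<Sum>m\<in>M. card (S m) choose r)
       = (\<Sum>F\<in>{F. F \<subseteq> A \<and> card F = r}. card {m \<in> M. F \<subseteq> S m})"
proof -
  let ?P = "{F. F \<subseteq> A \<and> card F = r}"
  have "finite ?P"
    using assms(1) by auto
  have "card (S m) choose r = (\<Sum>F\<in>?P. of_bool (F \<subseteq> S m))" if "m \<in> M" for m
  proof -
    have "?P \<inter> {F. F \<subseteq> S m} = {F. F \<subseteq> S m \<and> card F = r}"
      using assms(3)[OF that] by auto
    moreover have "finite (S m)"
      using assms(1) assms(3)[OF that] by (rule finite_subset[rotated])
    ultimately show ?thesis
      using \<open>finite ?P\<close> by (simp add: n_subsets)
  qed
  then have "(\<Sum>m\<in>M. card (S m) choose r) = (\<Sum>m\<in>M. \<Sum>F\<in>?P. of_bool (F \<subseteq> S m))"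
    by (rule sum.cong[OF refl])
  also have "\<dots> = (\<Sum>F\<in>?P. \<Sum>m\<in>M. of_bool (F \<subseteq> S m))"
    by (rule sum.swap)
  also have "\<dots> = (\<Sum>F\<in>?P. card {m \<in> M. F \<subseteq> S m})"
    using assms(2) by (simp add: Collect_conj_eq Int_commute)
  finally show ?thesis .
qed

lemma choose_square_identity:
  fixes n l r :: nat
  assumes "r \<le> l"
  shows "(n choose r)^2 * ((n - r) choose (l - r))^2 * fact (l - r) * fact r
       = (l choose r) * ((n choose l)^2 * fact l)"
proof (cases "l \<le> n")
  case True
  have "(n choose r) * ((n - r) choose (l - r)) = (n choose l) * (l choose r)"
    using choose_mult[OF assms True] by simp
  moreover have "fact r * fact (l - r) * (l choose r) = (fact l :: nat)"
    using binomial_fact_lemma[OF assms] .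
  ultimately show ?thesis
    by (metis (no_types, lifting) mult.assoc mult.commute power2_eq_square)
next
  case False
  then show ?thesis
    using assms by (simp add: binomial_eq_0) arith
qed

lemma sum_choose_card_fixed_point_set:
  assumes "finite A"
  shows "(\<Sum>m\<in>matchings_on A l. card (fixed_point_set m) choose r) * ((card A choose r) * fact r)
       = (l choose r) * card (matchings_on A l)"
proof (cases "r \<le> l")
  case False
  have "card (fixed_point_set m) < r" if "m \<in> matchings_on A l" for m
  proof -
    have "fst m \<subseteq> A"
      using that by (auto simp: matchings_on_def)
    then have "card (fixed_point_set m) \<le> card (fst m)"
      using assms by (intro card_mono) (auto simp: fixed_point_set_def intro: finite_subset)
    then show ?thesis
      using that False by (auto simp: matchings_on_def)
  qed
  then show ?thesis
    using False by (simp add: binomial_eq_0)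
next
  case True
  let ?n = "card A"
  have "(\<Sum>m\<in>matchings_on A l. card (fixed_point_set m) choose r)
      = (\<Sum>F\<in>{F. F \<subseteq> A \<and> card F = r}. card {m \<in> matchings_on A l. F \<subseteq> fixed_point_set m})"
    using assms by (intro sum_choose_card_eq_sum_card_supersets finite_matchings_on)
      (auto simp: matchings_on_def fixed_point_set_def)
  also have "\<dots> = (\<Sum>F\<in>{F. F \<subseteq> A \<and> card F = r}. ((?n - r) choose (l - r))^2 * fact (l - r))"
    using assms True
    by (intro sum.cong refl) (auto simp: card_matchings_on_fixing card_matchings_on card_Diff_subset
        finite_subset)
  also have "\<dots> = (?n choose r) * ((?n - r) choose (l - r))^2 * fact (l - r)"
    using assms by (simp add: n_subsets)
  finally show ?thesis
    using choose_square_identity[OF True, of ?n] assms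
    by (simp add: card_matchings_on power2_eq_square algebra_simps)
qed

lemma binomial_moment_fixed_points:
  assumes "l \<le> n" "r \<le> n"
  shows "(\<Sum>m\<in>matchings n l. real (fixed_points m choose r)) / real (card (matchings n l))
       = real (l choose r) / real (n choose r) / fact r"
proof -
  have "(\<Sum>m\<in>matchings n l. fixed_points m choose r) * ((n choose r) * fact r)
      = (l choose r) * card (matchings n l)"
    using sum_choose_card_fixed_point_set[where A = "{1..n}" and l = l and r = r]
    by (simp add: matchings_eq_matchings_on fixed_points_eq_card_fixed_point_set)
  then have "(\<Sum>m\<in>matchings n l. real (fixed_points m choose r)) * (real (n choose r) * fact r)
      = real (l choose r) * real (card (matchings n l))"
    by (metis of_nat_fact of_nat_mult of_nat_sum)
  moreover have "card (matchings n l) > 0" "n choose r > 0"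
    using assms by (simp_all add: matchings_eq_matchings_on card_matchings_on)
  ultimately show ?thesis
    by (simp add: divide_eq_eq eq_divide_eq)
qed

lemma sum_alternating_choose_mult_choose:
  assumes "f \<le> N"
  shows "(\<Sum>r\<le>N. (-1)^(r + k) * real (f choose r) * real (r choose k)) = of_bool (f = k)"
proof (cases "k \<le> f")
  case False
  then have "(-1)^(r + k) * real (f choose r) * real (r choose k) = 0" for r
    by (cases "r \<le> f") (simp_all add: binomial_eq_0)
  then have "(\<Sum>r\<le>N. (-1)^(r + k) * real (f choose r) * real (r choose k)) = 0"
    by (intro sum.neutral) blast
  then show ?thesis
    using False by simp
next
  case True
  define g where "g r = (-1)^(r + k) * real (f choose r) * real (r choose k)" for r
  have "(\<Sum>r\<le>N. g r) = (\<Sum>r\<in>{k..f}. g r)"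
    using assms by (intro sum.mono_neutral_right) (auto simp: g_def binomial_eq_0)
  also have "\<dots> = (\<Sum>s\<le>f - k. g (s + k))"
    using True sum.shift_bounds_cl_nat_ivl[of g 0 k "f - k"] by (simp add: atLeast0AtMost)
  also have "\<dots> = (\<Sum>s\<le>f - k. real (f choose k) * ((-1)^s * real ((f - k) choose s)))"
  proof (rule sum.cong[OF refl])
    fix s assume "s \<in> {..f - k}"
    then have "real (f choose (s + k)) * real ((s + k) choose k)
        = real (f choose k) * real ((f - k) choose s)"
      using choose_mult[of k "s + k" f] True by (simp flip: of_nat_mult)
    then show "g (s + k) = real (f choose k) * ((-1)^s * real ((f - k) choose s))"
      by (simp add: g_def power_add mult_ac)
  qed
  also have "\<dots> = of_bool (f = k)"
    using choose_alternating_sum[of "f - k", where 'a = real] True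
    by (auto simp flip: sum_distrib_left)
  finally show ?thesis
    by (simp add: g_def)
qed

lemma prob_fixed_eq_sum:
  assumes "l \<le> n"
  shows "prob_fixed n l k = (\<Sum>r\<le>n.
    (-1)^(r + k) * real (r choose k) * (real (l choose r) / real (n choose r)) / fact r)"
proof -
  let ?M = "matchings n l"
  have "finite ?M"
    by (simp add: matchings_eq_matchings_on finite_matchings_on)
  have "fixed_points m \<le> n" if "m \<in> ?M" for m
  proof -
    have "fixed_point_set m \<subseteq> {1..n}"
      using that by (auto simp: matchings_def fixed_point_set_def)
    then show ?thesis
      unfolding fixed_points_eq_card_fixed_point_set using card_mono[of "{1..n}"] by fastforce
  qed
  then have "real (card {m \<in> ?M. fixed_points m = k})
      = (\<Sum>m\<in>?M. \<Sum>r\<le>n. (-1)^(r + k) * real (fixed_points m choose r) * real (r choose k))"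
    using \<open>finite ?M\<close> by (simp add: sum_alternating_choose_mult_choose Collect_conj_eq Int_commute)
  also have "\<dots> = (\<Sum>r\<le>n. (-1)^(r + k) * real (r choose k) * (\<Sum>m\<in>?M. real (fixed_points m choose r)))"
    by (subst sum.swap) (simp add: sum_distrib_left mult_ac)
  finally have "prob_fixed n l k
      = (\<Sum>r\<le>n. (-1)^(r + k) * real (r choose k) *
          ((\<Sum>m\<in>?M. real (fixed_points m choose r)) / real (card ?M)))"
    unfolding prob_fixed_def by (simp only: sum_divide_distrib[of _ "{..n}"] times_divide_eq_right)
  also have "\<dots> = (\<Sum>r\<le>n.
      (-1)^(r + k) * real (r choose k) * (real (l choose r) / real (n choose r)) / fact r)"
    using assms by (intro sum.cong refl) (simp add: binomial_moment_fixed_points)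
  finally show ?thesis .
qed

lemma choose_ratio_eq_prod:
  "real (l choose r) / real (n choose r) = (\<Prod>i<r. (real l - real i) / (real n - real i))"
  by (simp add: binomial_gbinomial gbinomial_prod_rev atLeast0LessThan prod_dividef)

lemma choose_ratio_le_one: "l \<le> n \<Longrightarrow> real (l choose r) / real (n choose r) \<le> 1"
  by (simp add: divide_le_eq_1 binomial_right_mono) linarith

lemma tendsto_choose_ratio:
  fixes L :: "nat \<Rightarrow> nat"
  assumes "(\<lambda>n. real (L n) / real n) \<longlonglongrightarrow> theta"
  shows "(\<lambda>n. real (L n choose r) / real (n choose r)) \<longlonglongrightarrow> theta ^ r"
proof -
  have "(\<lambda>n. (real (L n) - real i) / (real n - real i)) \<longlonglongrightarrow> theta" for i
  proof -
    have "(\<lambda>n. (real (L n) / real n - real i * (1 / real n)) / (1 - real i * (1 / real n)))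
        \<longlonglongrightarrow> (theta - real i * 0) / (1 - real i * 0)"
      by (intro tendsto_intros assms lim_inverse_n') simp
    moreover have "\<forall>\<^sub>F n in sequentially.
        (real (L n) / real n - real i * (1 / real n)) / (1 - real i * (1 / real n))
      = (real (L n) - real i) / (real n - real i)"
      using eventually_gt_at_top[of i] by eventually_elim (simp add: field_simps)
    ultimately show ?thesis
      by (simp add: Lim_transform_eventually)
  qed
  then have "(\<lambda>n. \<Prod>i<r. (real (L n) - real i) / (real n - real i)) \<longlonglongrightarrow> (\<Prod>i<r. theta)"
    by (rule tendsto_prod)
  then show ?thesis
    by (simp add: choose_ratio_eq_prod)
qed

lemma summable_choose_div_fact: "summable (\<lambda>r. real (r choose k) / fact r)"
proof (rule summable_comparison_test)
  show "summable (\<lambda>r. inverse (fact r) * (2::real) ^ r)"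
    by (rule summable_exp)
  have "real (r choose k) \<le> 2 ^ r" for r
    using binomial_le_pow2[of r k] by (metis of_nat_le_iff of_nat_numeral of_nat_power)
  then show "\<exists>N. \<forall>r\<ge>N. norm (real (r choose k) / fact r) \<le> inverse (fact r) * 2 ^ r"
    by (auto simp: divide_simps)
qed

lemma sums_alternating_choose_power:
  fixes x :: real
  shows "(\<lambda>r. (-1)^(r + k) * real (r choose k) * x ^ r / fact r) sums (exp (- x) * x ^ k / fact k)"
proof -
  have "(\<lambda>j. x ^ k / fact k * ((- x) ^ j /\<^sub>R fact j)) sums (x ^ k / fact k * exp (- x))"
    by (rule sums_mult[OF exp_converges])
  moreover have "(-1)^(j + k + k) * real ((j + k) choose k) * x ^ (j + k) / fact (j + k)
      = x ^ k / fact k * ((- x) ^ j /\<^sub>R fact j)" for j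
  proof -
    have "real ((j + k) choose k) = fact (j + k) / (fact k * fact j)"
      using binomial_fact[of k "j + k"] by simp
    then show ?thesis
      by (simp add: power_add power_minus' field_simps)
  qed
  ultimately have "(\<lambda>j. (-1)^(j + k + k) * real ((j + k) choose k) * x ^ (j + k) / fact (j + k))
      sums (exp (- x) * x ^ k / fact k)"
    by (simp add: mult.commute)
  then show ?thesis
    by (subst (asm) sums_zero_iff_shift) (auto simp: binomial_eq_0)
qed

lemma tendsto_alternating_binomial_moment_series:
  fixes c :: "nat \<Rightarrow> nat \<Rightarrow> real"
  assumes bounded: "\<And>n r. \<bar>c n r\<bar> \<le> 1" and limit: "\<And>r. (\<lambda>n. c n r) \<longlonglongrightarrow> x ^ r"
  shows "(\<lambda>n. \<Sum>r. (-1)^(r + k) * real (r choose k) * c n r / fact r)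
      \<longlonglongrightarrow> exp (- x) * x ^ k / fact k"
proof -
  have "(\<lambda>n. \<Sum>r. (-1)^(r + k) * real (r choose k) * c n r / fact r)
      \<longlonglongrightarrow> (\<Sum>r. (-1)^(r + k) * real (r choose k) * x ^ r / fact r)"
  proof (rule tannerys_theorem[THEN conjunct2, THEN conjunct2])
    show "(\<lambda>n. (-1)^(r + k) * real (r choose k) * c n r / fact r)
        \<longlonglongrightarrow> (-1)^(r + k) * real (r choose k) * x ^ r / fact r" for r
      by (intro tendsto_intros limit) simp
    have "real (r choose k) * \<bar>c n r\<bar> / fact r \<le> real (r choose k) / fact r" for r n
      using bounded by (intro divide_right_mono mult_left_le) auto
    then show "\<forall>\<^sub>F (r, n) in at_top \<times>\<^sub>F sequentially.
        norm ((-1)^(r + k) * real (r choose k) * c n r / fact r) \<le> real (r choose k) / fact r"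
      by (intro always_eventually) (auto simp: abs_mult)
  qed (simp_all add: summable_choose_div_fact)
  then show ?thesis
    by (simp only: sums_unique[OF sums_alternating_choose_power, symmetric])
qed

theorem mainTheorem9:
  fixes L :: "nat \<Rightarrow> nat" and theta :: real and k :: nat
  assumes "\<And>n. L n \<le> n"
    and "0 \<le> theta" and "theta \<le> 1"
    and "(\<lambda>n. real (L n) / real n) \<longlonglongrightarrow> theta"
  shows "(\<lambda>n. prob_fixed n (L n) k) \<longlonglongrightarrow> exp (- theta) * theta ^ k / fact k"
proof -
  define c where "c n r = real (L n choose r) / real (n choose r)" for n r
  have "prob_fixed n (L n) k = (\<Sum>r. (-1)^(r + k) * real (r choose k) * c n r / fact r)" for n
  proof -
    have "prob_fixed n (L n) k = (\<Sum>r\<le>n. (-1)^(r + k) * real (r choose k) * c n r / fact r)"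
      unfolding c_def by (rule prob_fixed_eq_sum[OF assms(1)])
    also have "\<dots> = (\<Sum>r. (-1)^(r + k) * real (r choose k) * c n r / fact r)"
      \<comment> \<open>for \<open>r > n\<close> the term vanishes because \<open>n choose r = 0\<close> and \<open>x / 0 = 0\<close>\<close>
      by (rule suminf_finite[symmetric]) (auto simp: c_def binomial_eq_0)
    finally show ?thesis .
  qed
  moreover have "\<bar>c n r\<bar> \<le> 1" for n r
    using choose_ratio_le_one[OF assms(1)] by (simp add: c_def)
  moreover have "(\<lambda>n. c n r) \<longlonglongrightarrow> theta ^ r" for r
    unfolding c_def using assms(4) by (rule tendsto_choose_ratio)
  ultimately show ?thesis
    using tendsto_alternating_binomial_moment_series[of c theta k] by simp
qed

end
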